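(* Let $\kappa$ be a CMF kernel in dimension $D$. For all $\theta_1,\theta_2,\theta_3\in\mathbb R^D$, $\kappa(\theta_1,\theta_2)\,\kappa(\theta_2,\theta_3)\le\kappa(\theta_1,\theta_3)$.
   Context: CMF: $\varphi:[0,\infty)\to\mathbb R$ infinitely differentiable on $(0,\infty)$, right-continuous at $0$, $(-1)^n\varphi^{(n)}(x)\ge0$ for $x>0$, $n\ge0$. A CMF kernel in dimension $D$ is $\kappa(\theta,\theta')=\varphi(\|\theta-\theta'\|_p^p)$ with $\varphi$ a CMF, $\varphi(0)=1$, $\lim_{x\to\infty}\varphi(x)=0$, $0<p\le1$, $\|\theta\|_p^p=\sum_d|\theta[d]|^p$. *)

theory Defs
  imports "HOL-Analysis.Analysis"
begin

text \<open>Completely monotone function (CMF) on [0,\<infinity>): infinitely differentiable on (0,\<infinity>),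
  right-continuous at 0, and (-1)^n \<phi>^(n)(x) \<ge> 0 for all x > 0 and n \<ge> 0.
  Values of \<phi> at negative arguments are irrelevant.\<close>
definition CMF :: "(real \<Rightarrow> real) \<Rightarrow> bool" where
  "CMF \<phi> \<longleftrightarrow>
     (\<forall>n::nat. \<forall>x>0. ((deriv ^^ n) \<phi>) differentiable (at x)) \<and>
     continuous (at_right 0) \<phi> \<and>
     (\<forall>n::nat. \<forall>x>0. (-1) ^ n * (deriv ^^ n) \<phi> x \<ge> 0)"

definition pnorm_pow :: "real \<Rightarrow> real ^ 'd \<Rightarrow> real" where
  "pnorm_pow p \<theta> = (\<Sum>d\<in>UNIV. \<bar>\<theta> $ d\<bar> powr p)"

definition CMF_kernel_params :: "(real \<Rightarrow> real) \<Rightarrow> real \<Rightarrow> bool" where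
  "CMF_kernel_params \<phi> p \<longleftrightarrow>
     CMF \<phi> \<and> \<phi> 0 = 1 \<and> (\<phi> \<longlongrightarrow> 0) at_top \<and> 0 < p \<and> p \<le> 1"

definition cmf_kernel :: "(real \<Rightarrow> real) \<Rightarrow> real \<Rightarrow> real ^ 'd \<Rightarrow> real ^ 'd \<Rightarrow> real" where
  "cmf_kernel \<phi> p \<theta> \<theta>' = \<phi> (pnorm_pow p (\<theta> - \<theta>'))"

end

theory Submission
  imports Defs
begin

text \<open>
  Since \<open>t \<mapsto> t powr p\<close> is subadditive for \<open>0 < p \<le> 1\<close>, \<open>\<parallel>\<cdot>\<parallel>\<^sub>p\<^sup>p\<close> satisfies the
  triangle inequality, and as \<open>\<phi>\<close> is nonincreasing it suffices to show
  \<open>\<phi> a * \<phi> b \<le> \<phi> (a + b)\<close>, which follows from \<open>\<phi> 0 = 1\<close> once \<open>\<phi>\<close> is positive and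
  log-convex on \<open>(0,\<infinity>)\<close>.

  Both properties come from the Taylor expansion of \<open>\<phi>\<close> at \<open>y > x\<close> evaluated at \<open>x\<close>: by
  complete monotonicity all its terms \<open>b\<^sub>k\<close> are nonnegative, and expanding the Cauchy
  remainder once more around \<open>x/2\<close> shows that it converges to \<open>\<phi> x\<close>. Hence \<open>\<phi>\<close> cannot
  vanish at a point without vanishing on all of \<open>(0,\<infinity>)\<close>, and Cauchy-Schwarz for the
  moments \<open>\<Sum> b\<^sub>k\<close>, \<open>\<Sum> k b\<^sub>k\<close>, \<open>\<Sum> k\<^sup>2 b\<^sub>k\<close> gives, after letting \<open>y \<rightarrow> \<infinity>\<close>,
  \<open>\<phi>'\<^sup>2 \<le> \<phi> \<phi>''\<close>.
\<close>

lemma DERIV_taylor_poly_in_center: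
  fixes D :: "nat \<Rightarrow> real \<Rightarrow> real"
  assumes der: "\<And>k. DERIV (D k) t :> D (Suc k) t"
  shows "DERIV (\<lambda>t. \<Sum>k<Suc n. D k t / fact k * (x - t)^k) t :> D (Suc n) t / fact n * (x - t)^n"
proof (induction n)
  case 0
  show ?case using der[of 0] by simp
next
  case (Suc n)
  have "DERIV (\<lambda>t. (x - t)^Suc n) t :> - (real (Suc n) * (x - t)^n)"
    by (auto intro!: derivative_eq_intros) (cases n; simp add: algebra_simps)
  from DERIV_mult[OF DERIV_cdivide[OF der[of "Suc n"], of "fact (Suc n)"] this]
  have "DERIV (\<lambda>t. D (Suc n) t / fact (Suc n) * (x - t)^Suc n) t :>
          D (Suc (Suc n)) t / fact (Suc n) * (x - t)^Suc n - D (Suc n) t / fact n * (x - t)^n"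
    by (rule DERIV_cong) (simp add: field_simps del: of_nat_Suc)
  from DERIV_add[OF Suc this] show ?case by simp
qed

lemma taylor_cauchy_remainder:
  fixes D :: "nat \<Rightarrow> real \<Rightarrow> real"
  assumes der: "\<And>k t. x \<le> t \<Longrightarrow> t \<le> y \<Longrightarrow> DERIV (D k) t :> D (Suc k) t" and "x < y"
  shows "\<exists>\<xi>. x < \<xi> \<and> \<xi> < y \<and>
           D 0 x = (\<Sum>k<Suc n. D k y / fact k * (x - y)^k) + D (Suc n) \<xi> / fact n * (x - \<xi>)^n * (x - y)"
proof -
  define F where "F t = (\<Sum>k<Suc n. D k t / fact k * (x - t)^k)" for t
  have "DERIV F t :> D (Suc n) t / fact n * (x - t)^n" if "x \<le> t" "t \<le> y" for t
    unfolding F_def using that by (intro DERIV_taylor_poly_in_center der)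
  then obtain \<xi> where \<xi>: "x < \<xi>" "\<xi> < y" "F y - F x = (y - x) * (D (Suc n) \<xi> / fact n * (x - \<xi>)^n)"
    using MVT2[OF \<open>x < y\<close>, of F "\<lambda>t. D (Suc n) t / fact n * (x - t)^n"] by blast
  define r where "r = D (Suc n) \<xi> / fact n * (x - \<xi>)^n"
  have "F x = D 0 x"
    unfolding F_def by (induction n) auto
  with \<xi>(3) have "D 0 x = F y + r * (x - y)"
    unfolding r_def[symmetric] by (simp add: algebra_simps)
  with \<xi>(1,2) show ?thesis
    unfolding F_def r_def by blast
qed

definition cm_derivs :: "(nat \<Rightarrow> real \<Rightarrow> real) \<Rightarrow> bool" where
  "cm_derivs D \<longleftrightarrow>
     (\<forall>n t. 0 < t \<longrightarrow> DERIV (D n) t :> D (Suc n) t) \<and> (\<forall>n t. 0 < t \<longrightarrow> 0 \<le> (-1)^n * D n t)"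

lemma cm_derivs_DERIV: "cm_derivs D \<Longrightarrow> 0 < t \<Longrightarrow> DERIV (D n) t :> D (Suc n) t"
  unfolding cm_derivs_def by blast

lemma cm_derivs_sign: "cm_derivs D \<Longrightarrow> 0 < t \<Longrightarrow> 0 \<le> (-1)^n * D n t"
  unfolding cm_derivs_def by blast

lemma cm_derivs_taylor_term_nonneg:
  assumes "cm_derivs D" "0 < c" "a \<le> b"
  shows "0 \<le> D k c / fact k * (a - b)^k"
proof -
  have "(a - b)^k = (-1)^k * (b - a)^k"
    by (metis minus_diff_eq power_minus)
  then have "D k c / fact k * (a - b)^k = ((-1)^k * D k c) * (b - a)^k / fact k"
    by simp
  also have "\<dots> \<ge> 0"
    using cm_derivs_sign[OF assms(1,2)] assms(3) by simp
  finally show ?thesis .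
qed

lemma cm_derivs_taylor_coeff_le:
  assumes D: "cm_derivs D" and "0 < a" "a < c"
  shows "(-1)^m * D m c / fact m * (c - a)^m \<le> D 0 a"
proof -
  obtain t where t: "a < t" "t < c"
    and taylor: "D 0 a = (\<Sum>k<Suc m. D k c / fact k * (a - c)^k) + D (Suc m) t / fact (Suc m) * (a - c)^Suc m"
    using Taylor_down[of "Suc m" D "D 0" a c c] cm_derivs_DERIV[OF D] assms by force
  have "0 \<le> D (Suc m) t / fact (Suc m) * (a - c)^Suc m"
    using assms t by (intro cm_derivs_taylor_term_nonneg[OF D]) auto
  moreover have "0 \<le> (\<Sum>k<m. D k c / fact k * (a - c)^k)"
    using assms by (intro sum_nonneg cm_derivs_taylor_term_nonneg[OF D]) auto
  moreover have "(a - c)^m = (-1)^m * (c - a)^m"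
    by (metis minus_diff_eq power_minus)
  then have "D m c / fact m * (a - c)^m = (-1)^m * D m c / fact m * (c - a)^m"
    by simp
  ultimately show ?thesis
    using taylor by (simp only: sum.lessThan_Suc)
qed

lemma cm_derivs_taylor_remainder_bounds:
  assumes D: "cm_derivs D" and x: "0 < x" "x < y"
  defines "q \<equiv> (y - x) / (y - x/2)"
  shows "0 \<le> D 0 x - (\<Sum>k<Suc n. D k y / fact k * (x - y)^k)"
    and "D 0 x - (\<Sum>k<Suc n. D k y / fact k * (x - y)^k) \<le> real (Suc n) * q^n * (y - x) * D 0 (x/2) / (x/2)"
proof -
  obtain \<xi> where \<xi>: "x < \<xi>" "\<xi> < y"
    and rem: "D 0 x - (\<Sum>k<Suc n. D k y / fact k * (x - y)^k) = D (Suc n) \<xi> / fact n * (x - \<xi>)^n * (x - y)"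
    using taylor_cauchy_remainder[of x y D n] cm_derivs_DERIV[OF D] x by fastforce
  define A where "A = (-1)^Suc n * D (Suc n) \<xi> / fact (Suc n)"
  define u where "u = \<xi> - x/2"
  define v where "v = \<xi> - x"
  have uv: "0 \<le> v" "v < u" "x/2 \<le> u"
    using \<xi> x by (auto simp: u_def v_def)
  have "0 \<le> A"
    unfolding A_def using cm_derivs_sign[OF D, of \<xi> "Suc n"] x \<xi> by (simp del: power_Suc)
  \<comment> \<open>Expanding around \<open>\<xi>\<close> down to \<open>x/2\<close> bounds the coefficient \<open>A\<close> of the Cauchy remainder.\<close>
  have A_bound: "A * u^Suc n \<le> D 0 (x/2)"
    using cm_derivs_taylor_coeff_le[OF D, of "x/2" \<xi> "Suc n"] x \<xi> unfolding A_def u_def by simp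
  have "(x - \<xi>)^n = (-1)^n * v^n"
    unfolding v_def by (metis minus_diff_eq power_minus)
  then have R: "D 0 x - (\<Sum>k<Suc n. D k y / fact k * (x - y)^k) = real (Suc n) * (A * v^n) * (y - x)"
    unfolding rem A_def by (simp add: field_simps del: of_nat_Suc)
  show "0 \<le> D 0 x - (\<Sum>k<Suc n. D k y / fact k * (x - y)^k)"
    unfolding R using \<open>0 \<le> A\<close> uv x by simp
  have "\<xi> * x \<le> y * x"
    using \<xi> x by (intro mult_right_mono) auto
  then have "v * (y - x/2) \<le> (y - x) * u"
    unfolding u_def v_def by (simp add: field_simps)
  then have "v / u \<le> q"
    using uv x unfolding q_def by (simp add: field_simps)
  have "0 \<le> q"
    unfolding q_def using x by (intro divide_nonneg_pos) auto
  have "A * v^n = (A * u^Suc n) * (v/u)^n / u"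
    using uv by (simp add: field_simps power_divide)
  also have "\<dots> \<le> D 0 (x/2) * q^n / (x/2)"
    using A_bound uv x \<open>v / u \<le> q\<close> \<open>0 \<le> q\<close> \<open>0 \<le> A\<close> cm_derivs_sign[OF D, of "x/2" 0]
    by (intro frac_le mult_mono power_mono) auto
  finally have "real (Suc n) * (A * v^n) * (y - x) \<le> real (Suc n) * (D 0 (x/2) * q^n / (x/2)) * (y - x)"
    using x by (intro mult_right_mono mult_left_mono) auto
  then show "D 0 x - (\<Sum>k<Suc n. D k y / fact k * (x - y)^k) \<le> real (Suc n) * q^n * (y - x) * D 0 (x/2) / (x/2)"
    unfolding R by (simp add: mult_ac)
qed

lemma cm_derivs_taylor_sums:
  assumes D: "cm_derivs D" and x: "0 < x" "x < y"
  shows "(\<lambda>k. D k y / fact k * (x - y)^k) sums D 0 x"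
proof -
  define q where "q = (y - x) / (y - x/2)"
  define R where "R n = D 0 x - (\<Sum>k<Suc n. D k y / fact k * (x - y)^k)" for n
  define B where "B n = real (Suc n) * q^n * (y - x) * D 0 (x/2) / (x/2)" for n
  have "0 \<le> q" "q < 1"
    using x by (auto simp: q_def field_simps)
  then have "(\<lambda>n. real n * q^n + q^n) \<longlonglongrightarrow> 0 + 0"
    by (intro tendsto_add powser_times_n_limit_0 LIMSEQ_power_zero) auto
  then have "B \<longlonglongrightarrow> 0 * (y - x) * D 0 (x/2) / (x/2)"
    unfolding B_def using x by (intro tendsto_intros) (simp_all add: algebra_simps)
  moreover have "0 \<le> R n" "R n \<le> B n" for n
    unfolding R_def B_def q_def using cm_derivs_taylor_remainder_bounds[OF D x] by blast+
  ultimately have "R \<longlonglongrightarrow> 0"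
    by (intro tendsto_sandwich[of "\<lambda>_. 0" R _ B]) auto
  then have "(\<lambda>n. D 0 x - R n) \<longlonglongrightarrow> D 0 x - 0"
    by (intro tendsto_diff tendsto_const)
  then have "(\<lambda>n. \<Sum>k<Suc n. D k y / fact k * (x - y)^k) \<longlonglongrightarrow> D 0 x"
    by (simp add: R_def)
  then show ?thesis
    unfolding sums_def by (rule LIMSEQ_imp_Suc)
qed

lemma cm_derivs_shift:
  assumes D: "cm_derivs D"
  shows "cm_derivs (\<lambda>n t. (-1)^j * D (n + j) t)"
  unfolding cm_derivs_def
proof (intro conjI allI impI)
  fix n and t :: real
  assume "0 < t"
  show "DERIV (\<lambda>t. (-1)^j * D (n + j) t) t :> (-1)^j * D (Suc n + j) t"
    using cm_derivs_DERIV[OF D \<open>0 < t\<close>, of "n + j"] by (auto intro: DERIV_cmult)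
  show "0 \<le> (-1)^n * ((-1)^j * D (n + j) t)"
    using cm_derivs_sign[OF D \<open>0 < t\<close>, of "n + j"] by (simp add: power_add mult_ac)
qed

lemma cm_derivs_binomial_taylor_sums:
  assumes D: "cm_derivs D" and x: "0 < x" "x < y"
  shows "(\<lambda>k. real (k choose j) * (D k y / fact k * (x - y)^k)) sums ((x - y)^j * D j x / fact j)"
proof -
  define E where "E n t = (-1)^j * D (n + j) t" for n t
  have sign_sq: "(-1::real)^j * (-1)^j = 1"
    by (simp flip: power_add)
  have "(\<lambda>m. E m y / fact m * (x - y)^m) sums E 0 x"
    unfolding E_def by (rule cm_derivs_taylor_sums[OF cm_derivs_shift[OF D] x])
  then have "(\<lambda>m. (-1)^j * (x - y)^j / fact j * (E m y / fact m * (x - y)^m))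
               sums ((-1)^j * (x - y)^j / fact j * E 0 x)"
    by (rule sums_mult)
  moreover have "(-1)^j * (x - y)^j / fact j * (E m y / fact m * (x - y)^m)
      = real ((m + j) choose j) * (D (m + j) y / fact (m + j) * (x - y)^(m + j))" for m
  proof -
    have "real ((m + j) choose j) = fact (m + j) / (fact j * fact m)"
      by (simp add: binomial_fact)
    with sign_sq show ?thesis
      unfolding E_def by (simp add: power_add field_simps)
  qed
  ultimately have "(\<lambda>m. real ((m + j) choose j) * (D (m + j) y / fact (m + j) * (x - y)^(m + j)))
                     sums ((x - y)^j * D j x / fact j)"
    unfolding E_def using sign_sq by (simp add: mult_ac)
  then show ?thesis
    by (rule sums_zero_iff_shift[THEN iffD1, rotated]) (simp add: binomial_eq_0)
qed

lemma sums_Cauchy_Schwarz: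
  fixes b :: "nat \<Rightarrow> real"
  assumes b: "\<And>k. 0 \<le> b k" "b sums B" "0 < B"
    and M: "(\<lambda>k. real k * b k) sums M" and S: "(\<lambda>k. (real k)^2 * b k) sums S"
  shows "M^2 \<le> B * S"
proof -
  define t where "t = M / B"
  have "(\<lambda>k. (real k)^2 * b k - 2 * t * (real k * b k) + t^2 * b k) sums (S - 2 * t * M + t^2 * B)"
    by (intro sums_add sums_diff sums_mult S M b)
  moreover have "(\<lambda>k. (real k)^2 * b k - 2 * t * (real k * b k) + t^2 * b k) = (\<lambda>k. b k * (real k - t)^2)"
    by (simp add: fun_eq_iff power2_eq_square algebra_simps)
  ultimately have T: "(\<lambda>k. b k * (real k - t)^2) sums (S - 2 * t * M + t^2 * B)"
    by simp
  have "0 \<le> S - 2 * t * M + t^2 * B"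
    by (rule sums_le[OF _ sums_zero T]) (simp add: b(1))
  then have "0 \<le> B * (S - 2 * t * M + t^2 * B)"
    using \<open>0 < B\<close> by simp
  also have "\<dots> = B * S - M^2"
    using \<open>0 < B\<close> unfolding t_def by (simp add: power2_eq_square field_simps)
  finally show ?thesis
    by simp
qed

lemma two_times_choose_two: "2 * real (k choose 2) = real k * (real k - 1)"
  by (induction k) (simp_all add: numeral_2_eq_2 algebra_simps)

lemma cm_derivs_log_convex:
  assumes D: "cm_derivs D" and x: "0 < x" "0 < D 0 x"
  shows "(D 1 x)^2 \<le> D 0 x * D 2 x"
proof (rule field_le_epsilon)
  have bound: "(D 1 x)^2 \<le> D 0 x * D 2 x + D 0 x * (- D 1 x) / s" if "0 < s" for s
  proof -
    define b where "b k = D k (x + s) / fact k * (x - (x + s))^k" for k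
    have xy: "x < x + s"
      using \<open>0 < s\<close> by simp
    have "0 \<le> b k" for k
      unfolding b_def using x xy by (intro cm_derivs_taylor_term_nonneg[OF D]) auto
    moreover have "b sums D 0 x"
      unfolding b_def by (rule cm_derivs_taylor_sums[OF D x(1) xy])
    moreover have M: "(\<lambda>k. real k * b k) sums (- s * D 1 x)"
      using cm_derivs_binomial_taylor_sums[OF D x(1) xy, of 1] unfolding b_def by simp
    moreover have "(\<lambda>k. (real k)^2 * b k) sums (s^2 * D 2 x - s * D 1 x)"
    proof -
      have "(\<lambda>k. real (k choose 2) * b k) sums (s^2 * D 2 x / 2)"
        using cm_derivs_binomial_taylor_sums[OF D x(1) xy, of 2] unfolding b_def by simp
      from sums_add[OF sums_mult[OF this, of 2] M] show ?thesis
        by (simp add: two_times_choose_two power2_eq_square algebra_simps)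
    qed
    ultimately have "(- s * D 1 x)^2 \<le> D 0 x * (s^2 * D 2 x - s * D 1 x)"
      using x by (intro sums_Cauchy_Schwarz)
    moreover have "D 0 x * (s^2 * D 2 x - s * D 1 x) = s^2 * (D 0 x * D 2 x + D 0 x * (- D 1 x) / s)"
      using \<open>0 < s\<close> by (simp add: power2_eq_square field_simps)
    ultimately have "s^2 * (D 1 x)^2 \<le> s^2 * (D 0 x * D 2 x + D 0 x * (- D 1 x) / s)"
      by (simp add: power_mult_distrib)
    then show ?thesis
      using \<open>0 < s\<close> by simp
  qed
  fix e :: real
  assume "0 < e"
  define c where "c = D 0 x * (- D 1 x)"
  have "0 \<le> c"
    unfolding c_def using cm_derivs_sign[OF D x(1), of 1] x(2) by (simp add: mult_nonneg_nonpos)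
  have "0 < (c + 1) / e"
    using \<open>0 \<le> c\<close> \<open>0 < e\<close> by simp
  from bound[OF this, folded c_def]
  have "(D 1 x)^2 \<le> D 0 x * D 2 x + c / ((c + 1) / e)" .
  moreover have "c / ((c + 1) / e) = e * (c / (c + 1))"
    by (simp add: mult.commute)
  moreover have "e * (c / (c + 1)) \<le> e * 1"
    using \<open>0 \<le> c\<close> \<open>0 < e\<close> by (intro mult_left_mono) auto
  ultimately show "(D 1 x)^2 \<le> D 0 x * D 2 x + e"
    by linarith
qed

lemma cm_derivs_antimono:
  assumes D: "cm_derivs D" and "0 < s" "s \<le> t"
  shows "D 0 t \<le> D 0 s"
proof (rule DERIV_nonpos_imp_nonincreasing[OF \<open>s \<le> t\<close>])
  fix z
  assume "s \<le> z" "z \<le> t"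
  then have "0 < z"
    using \<open>0 < s\<close> by simp
  then show "\<exists>d. DERIV (D 0) z :> d \<and> d \<le> 0"
    using cm_derivs_DERIV[OF D, of z 0] cm_derivs_sign[OF D, of z 1] by auto
qed

lemma cm_derivs_eq_0:
  assumes D: "cm_derivs D" and x: "0 < x" "D 0 x = 0" and "0 < t"
  shows "D 0 t = 0"
proof -
  have vanish_beyond: "D k t = 0" if "x < t" for k t
    using that
  proof (induction k arbitrary: t)
    case 0
    then show ?case
      using cm_derivs_antimono[OF D, of x t] cm_derivs_sign[OF D, of t 0] x by simp
  next
    case (Suc k)
    have "DERIV (D k) t :> 0"
      by (rule has_field_derivative_transform_within_open[of "\<lambda>_. 0" 0 t "{x<..}"]) (use Suc in auto)
    then show ?case
      using DERIV_unique cm_derivs_DERIV[OF D, of t k] Suc.prems x by fastforce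
  qed
  show ?thesis
  proof (cases "x < t")
    case True
    then show ?thesis
      by (rule vanish_beyond)
  next
    case False
    then have "(\<lambda>k. D k (x + 1) / fact k * (t - (x + 1))^k) sums D 0 t"
      using \<open>0 < t\<close> by (intro cm_derivs_taylor_sums[OF D]) auto
    moreover have "(\<lambda>k. D k (x + 1) / fact k * (t - (x + 1))^k) = (\<lambda>_. 0)"
      using vanish_beyond[of "x + 1"] by simp
    ultimately show ?thesis
      by (metis sums_zero sums_unique2)
  qed
qed

lemma CMF_cm_derivs: "CMF \<phi> \<Longrightarrow> cm_derivs (\<lambda>n. (deriv ^^ n) \<phi>)"
  unfolding CMF_def cm_derivs_def by (simp add: DERIV_deriv_iff_real_differentiable)

lemma CMF_tendsto_at_right_0: "CMF \<phi> \<Longrightarrow> (\<phi> \<longlongrightarrow> \<phi> 0) (at_right 0)"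
  unfolding CMF_def by (simp add: continuous_within)

lemma CMF_antimono:
  assumes \<phi>: "CMF \<phi>" and "0 \<le> u" "u \<le> v"
  shows "\<phi> v \<le> \<phi> u"
proof (cases "u = 0")
  case False
  then show ?thesis
    using cm_derivs_antimono[OF CMF_cm_derivs[OF \<phi>], of u v] assms by simp
next
  case True
  have "\<forall>\<^sub>F z in at_right 0. \<phi> v \<le> \<phi> z" if "0 < v"
    using eventually_at_right_real[OF that]
    by eventually_elim (use cm_derivs_antimono[OF CMF_cm_derivs[OF \<phi>], of _ v] in auto)
  then have "\<phi> v \<le> \<phi> 0" if "0 < v"
    using that by (intro tendsto_le[OF trivial_limit_at_right_real CMF_tendsto_at_right_0[OF \<phi>] tendsto_const])
  then show ?thesis
    using True assms by (cases "v = 0") auto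
qed

lemma CMF_pos:
  assumes \<phi>: "CMF \<phi>" and "\<phi> 0 \<noteq> 0" "0 < x"
  shows "0 < \<phi> x"
proof (rule ccontr)
  assume "\<not> 0 < \<phi> x"
  with cm_derivs_sign[OF CMF_cm_derivs[OF \<phi>] \<open>0 < x\<close>, of 0] have "\<phi> x = 0"
    by simp
  then have "\<forall>\<^sub>F t in at_right 0. \<phi> t = 0"
    using cm_derivs_eq_0[OF CMF_cm_derivs[OF \<phi>], of x] \<open>0 < x\<close> eventually_at_right_real[of 0 1]
    by (auto elim: eventually_mono)
  then have "(\<phi> \<longlongrightarrow> 0) (at_right 0)"
    by (rule tendsto_eventually)
  with CMF_tendsto_at_right_0[OF \<phi>] have "\<phi> 0 = 0"
    using tendsto_unique[OF trivial_limit_at_right_real] by blast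
  with \<open>\<phi> 0 \<noteq> 0\<close> show False ..
qed

lemma mono_deriv_imp_add_le:
  fixes f f' :: "real \<Rightarrow> real"
  assumes der: "\<And>z. e \<le> z \<Longrightarrow> z \<le> a + b - e \<Longrightarrow> DERIV f z :> f' z"
    and mono: "\<And>u v. e \<le> u \<Longrightarrow> u \<le> v \<Longrightarrow> v \<le> a + b - e \<Longrightarrow> f' u \<le> f' v"
    and "e < a" "a \<le> b"
  shows "f a + f b \<le> f e + f (a + b - e)"
proof -
  obtain \<xi>1 where \<xi>1: "e < \<xi>1" "\<xi>1 < a" "f a - f e = (a - e) * f' \<xi>1"
    using MVT2[of e a f f'] der assms by auto
  obtain \<xi>2 where \<xi>2: "b < \<xi>2" "\<xi>2 < a + b - e" "f (a + b - e) - f b = (a - e) * f' \<xi>2"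
    using MVT2[of b "a + b - e" f f'] der assms by auto
  have "(a - e) * f' \<xi>1 \<le> (a - e) * f' \<xi>2"
    using mono[of \<xi>1 \<xi>2] \<xi>1 \<xi>2 assms by (intro mult_left_mono) auto
  with \<xi>1(3) \<xi>2(3) show ?thesis
    by linarith
qed

lemma CMF_mult_le_mult_spread:
  assumes \<phi>: "CMF \<phi>" and "\<phi> 0 \<noteq> 0" and e: "0 < e" "e < a" "a \<le> b"
  shows "\<phi> a * \<phi> b \<le> \<phi> e * \<phi> (a + b - e)"
proof -
  define d where "d n = (deriv ^^ n) \<phi>" for n
  have D: "cm_derivs d"
    unfolding d_def by (rule CMF_cm_derivs[OF \<phi>])
  have pos: "0 < \<phi> z" if "0 < z" for z
    using CMF_pos[OF \<phi> \<open>\<phi> 0 \<noteq> 0\<close> that] .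
  have "d 0 = \<phi>"
    by (simp add: d_def)
  have \<phi>_der: "DERIV \<phi> z :> d 1 z" if "0 < z" for z
    using cm_derivs_DERIV[OF D that, of 0] by (simp add: \<open>d 0 = \<phi>\<close>)
  have ln_der: "DERIV (\<lambda>z. ln (\<phi> z)) z :> d 1 z / \<phi> z" if "0 < z" for z
    using DERIV_chain2[OF DERIV_ln_divide[OF pos[OF that]] \<phi>_der[OF that]] by simp
  have "d 1 u / \<phi> u \<le> d 1 v / \<phi> v" if "0 < u" "u \<le> v" for u v
  proof (rule DERIV_nonneg_imp_nondecreasing[OF \<open>u \<le> v\<close>])
    fix z
    assume "u \<le> z" "z \<le> v"
    then have "0 < z"
      using \<open>0 < u\<close> by simp
    have "DERIV (\<lambda>z. d 1 z / \<phi> z) z :> (d 2 z * \<phi> z - d 1 z * d 1 z) / (\<phi> z * \<phi> z)"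
      using \<phi>_der[OF \<open>0 < z\<close>] cm_derivs_DERIV[OF D \<open>0 < z\<close>, of 1] pos[OF \<open>0 < z\<close>]
      by (intro DERIV_divide) (simp_all add: numeral_2_eq_2)
    moreover have "0 \<le> (d 2 z * \<phi> z - d 1 z * d 1 z) / (\<phi> z * \<phi> z)"
      using cm_derivs_log_convex[OF D \<open>0 < z\<close>] pos[OF \<open>0 < z\<close>]
      by (simp add: \<open>d 0 = \<phi>\<close> power2_eq_square mult.commute)
    ultimately show "\<exists>y. DERIV (\<lambda>z. d 1 z / \<phi> z) z :> y \<and> 0 \<le> y"
      by blast
  qed
  then have "ln (\<phi> a) + ln (\<phi> b) \<le> ln (\<phi> e) + ln (\<phi> (a + b - e))"
    using e ln_der by (intro mono_deriv_imp_add_le[where f' = "\<lambda>z. d 1 z / \<phi> z"]) auto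
  moreover have "0 < \<phi> a" "0 < \<phi> b" "0 < \<phi> e" "0 < \<phi> (a + b - e)"
    using e pos by auto
  ultimately have "ln (\<phi> a * \<phi> b) \<le> ln (\<phi> e * \<phi> (a + b - e))"
    by (simp add: ln_mult)
  then show ?thesis
    using \<open>0 < \<phi> a\<close> \<open>0 < \<phi> b\<close> \<open>0 < \<phi> e\<close> \<open>0 < \<phi> (a + b - e)\<close> by simp
qed

lemma CMF_mult_le_add:
  assumes \<phi>: "CMF \<phi>" and "\<phi> 0 = 1" "0 \<le> a" "0 \<le> b"
  shows "\<phi> a * \<phi> b \<le> \<phi> (a + b)"
proof -
  have main: "\<phi> a * \<phi> b \<le> \<phi> (a + b)" if "0 < a" "a \<le> b" for a b
  proof -
    have "isCont \<phi> (a + b)"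
      using cm_derivs_DERIV[OF CMF_cm_derivs[OF \<phi>], of "a + b" 0] that by (simp add: DERIV_isCont)
    then have "((\<lambda>e. \<phi> (a + b - e)) \<longlongrightarrow> \<phi> (a + b - 0)) (at_right 0)"
      by (intro isCont_tendsto_compose[of _ \<phi>] tendsto_intros) auto
    then have "((\<lambda>e. \<phi> e * \<phi> (a + b - e)) \<longlongrightarrow> \<phi> 0 * \<phi> (a + b)) (at_right 0)"
      by (intro tendsto_mult CMF_tendsto_at_right_0[OF \<phi>]) simp
    moreover have "\<forall>\<^sub>F e in at_right 0. \<phi> a * \<phi> b \<le> \<phi> e * \<phi> (a + b - e)"
      using eventually_at_right_real[OF \<open>0 < a\<close>]
      by eventually_elim (use that \<open>\<phi> 0 = 1\<close> in \<open>auto intro: CMF_mult_le_mult_spread[OF \<phi>]\<close>)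
    ultimately show ?thesis
      using \<open>\<phi> 0 = 1\<close> by (auto intro: tendsto_le[OF trivial_limit_at_right_real _ tendsto_const])
  qed
  show ?thesis
  proof (cases "a = 0 \<or> b = 0")
    case True
    then show ?thesis
      using \<open>\<phi> 0 = 1\<close> by auto
  next
    case False
    then show ?thesis
      using main[of a b] main[of b a] assms by (cases "a \<le> b") (auto simp: mult.commute add.commute)
  qed
qed

lemma powr_add_le_add_powr:
  fixes u v p :: real
  assumes "0 \<le> u" "0 \<le> v" "0 < p" "p \<le> 1"
  shows "(u + v) powr p \<le> u powr p + v powr p"
proof (cases "u + v = 0")
  case True
  then show ?thesis
    using assms by simp
next
  case False
  define w where "w = u + v"
  have "0 < w"
    using False assms by (simp add: w_def)
  have share: "w powr p * (z / w) \<le> z powr p" if "0 \<le> z" "z \<le> w" for z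
  proof -
    have "w powr p * (z / w) = w powr p * (z / w) powr 1"
      using that \<open>0 < w\<close> by simp
    also have "\<dots> \<le> w powr p * (z / w) powr p"
      using that \<open>0 < w\<close> assms by (intro mult_left_mono powr_mono') auto
    also have "\<dots> = z powr p"
      using \<open>0 < w\<close> by (simp add: powr_mult[symmetric])
    finally show ?thesis .
  qed
  have "w powr p = w powr p * ((u + v) / w)"
    using \<open>0 < w\<close> by (simp add: w_def)
  also have "\<dots> = w powr p * (u / w) + w powr p * (v / w)"
    by (simp add: add_divide_distrib distrib_left)
  also have "\<dots> \<le> u powr p + v powr p"
    using share[of u] share[of v] assms by (simp add: w_def)
  finally show ?thesis
    by (simp add: w_def)
qed

lemma pnorm_pow_nonneg: "0 \<le> pnorm_pow p \<theta>"
  unfolding pnorm_pow_def by (intro sum_nonneg) simp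

lemma pnorm_pow_triangle:
  assumes "0 < p" "p \<le> 1"
  shows "pnorm_pow p (\<theta> + \<theta>') \<le> pnorm_pow p \<theta> + pnorm_pow p \<theta>'"
  unfolding pnorm_pow_def sum.distrib[symmetric]
proof (rule sum_mono)
  fix d
  have "\<bar>(\<theta> + \<theta>') $ d\<bar> powr p \<le> (\<bar>\<theta> $ d\<bar> + \<bar>\<theta>' $ d\<bar>) powr p"
    using assms by (intro powr_mono2) (auto simp: abs_triangle_ineq)
  also have "\<dots> \<le> \<bar>\<theta> $ d\<bar> powr p + \<bar>\<theta>' $ d\<bar> powr p"
    using assms by (intro powr_add_le_add_powr) auto
  finally show "\<bar>(\<theta> + \<theta>') $ d\<bar> powr p \<le> \<bar>\<theta> $ d\<bar> powr p + \<bar>\<theta>' $ d\<bar> powr p" .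
qed

theorem mainTheorem13:
  fixes \<phi> :: "real \<Rightarrow> real" and p :: real and \<theta>1 \<theta>2 \<theta>3 :: "real ^ 'd"
  assumes "CMF_kernel_params \<phi> p"
  shows "cmf_kernel \<phi> p \<theta>1 \<theta>2 * cmf_kernel \<phi> p \<theta>2 \<theta>3 \<le> cmf_kernel \<phi> p \<theta>1 \<theta>3"
proof -
  have \<phi>: "CMF \<phi>" "\<phi> 0 = 1" and p: "0 < p" "p \<le> 1"
    using assms unfolding CMF_kernel_params_def by auto
  have "pnorm_pow p (\<theta>1 - \<theta>3) \<le> pnorm_pow p (\<theta>1 - \<theta>2) + pnorm_pow p (\<theta>2 - \<theta>3)"
    using pnorm_pow_triangle[OF p, of "\<theta>1 - \<theta>2" "\<theta>2 - \<theta>3"] by simp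
  then have "\<phi> (pnorm_pow p (\<theta>1 - \<theta>2) + pnorm_pow p (\<theta>2 - \<theta>3)) \<le> \<phi> (pnorm_pow p (\<theta>1 - \<theta>3))"
    by (intro CMF_antimono[OF \<phi>(1)] pnorm_pow_nonneg)
  moreover have "\<phi> (pnorm_pow p (\<theta>1 - \<theta>2)) * \<phi> (pnorm_pow p (\<theta>2 - \<theta>3))
                   \<le> \<phi> (pnorm_pow p (\<theta>1 - \<theta>2) + pnorm_pow p (\<theta>2 - \<theta>3))"
    by (intro CMF_mult_le_add[OF \<phi>] pnorm_pow_nonneg)
  ultimately show ?thesis
    unfolding cmf_kernel_def by linarith
qed

end
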